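(* Water-Filling is at most $(2-\sqrt2)$-competitive for the fully online fractional matching problem, even on bipartite graphs: for every $\varepsilon>0$ there is a bipartite instance on which Water-Filling produces a fractional matching $x$ with $\sum_{e}x_e\le(2-\sqrt2+\varepsilon)\cdot\mathrm{OPT}$, where $\mathrm{OPT}$ is the maximum matching size (in fact the instance $G_{k,m}$ of the context achieves ratio tending to $2-\sqrt2$ as $m\to\infty$ and then $k\to\infty$).
   Context: Fully online fractional matching model: an undirected graph is revealed online; each step is the arrival or the deadline of a vertex; at arrival, edges to previously arrived vertices are revealed; every neighbor of $v$ arrives before $v$'s deadline. The algorithm maintains $x_{uv}\ge 0$ with water-level $x_w:=\sum_{z}x_{wz}\le1$; $x_{uv}$ (with $u$ having the earlier deadline) may only be increased at $u$'s deadline. Water-Filling: at the deadline of $u$, with $N(u)$ the neighbors of $u$ whose deadlines have not been reached, while $x_u<1$ and $\min_{v\in N(u)}x_v<1$, continuously increase $x_{uv}$ at equal rates for all $v\in\arg\min_{v\in N(u)}x_v$. Let $c=2-\sqrt2$, $f(x)=\tfrac12(\ln(1-x)+\ln(1-c+x))+\frac{1}{\sqrt2(x-1)}+\frac{2+\sqrt2-\ln(1-c)}{2}$ on $[0,c]$ (a strictly decreasing bijection onto $[0,1]$), and $h(x)=f(c-f^{-1}(x))$ for $x\in[0,1]$. Hard instance $G_{k,m}$: vertex set $\bigcup_{t\in[m]}(U_t\cup V_t)$ with $U_t=\{u_{t,1},\dots,u_{t,k}\}$, $V_t=\{v_{t,1},\dots,v_{t,k}\}$. Edges: $(u_{t,i},v_{t,j})$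 for all $t\in[m]$, $i\in[k]$, $j\ge i$; and $(u_{t,i},u_{t+1,j})$ for all $t\in[m-1]$, $i\in[k]$, $1\le j\le\lfloor k\,h(\tfrac{i-1}{k})\rfloor$. All vertices arrive before any deadline. The deadlines of the $u$-vertices come first, in lexicographic order of $(t,i)$; afterwards the deadlines of all $v$-vertices are reached (in any order). This graph is bipartite and has a perfect matching $\{(u_{t,i},v_{t,i})\}$, so $\mathrm{OPT}=km$. *)

theory Defs
  imports Complex_Main
begin

datatype 'a event = Arrival 'a | Deadline 'a

definition before :: "'a event list \<Rightarrow> 'a event \<Rightarrow> 'a event \<Rightarrow> bool" where
  "before evs a b \<longleftrightarrow> (\<exists>i j. i < j \<and> j < length evs \<and> evs ! i = a \<and> evs ! j = b)"

definition online_instance :: "'a set \<Rightarrow> 'a set set \<Rightarrow> 'a event list \<Rightarrow> bool" where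
  "online_instance V E evs \<longleftrightarrow>
     finite V \<and>
     E \<subseteq> {{u, v} | u v. u \<in> V \<and> v \<in> V \<and> u \<noteq> v} \<and>
     distinct evs \<and>
     set evs = Arrival ` V \<union> Deadline ` V \<and>
     (\<forall>v\<in>V. before evs (Arrival v) (Deadline v)) \<and>
     (\<forall>u v. {u, v} \<in> E \<longrightarrow> before evs (Arrival u) (Deadline v))"

definition level :: "'a set set \<Rightarrow> ('a set \<Rightarrow> real) \<Rightarrow> 'a \<Rightarrow> real" where
  "level E x w = (\<Sum>e\<in>{e\<in>E. w \<in> e}. x e)"

text \<open>One Water-Filling step at the deadline of u, with N the set of neighbours
of u whose deadlines have not been reached.  The continuous process raises the
lowest levels in N equally; its outcome is: for a final water level L \<le> 1,
each v in N receives max 0 (L - x_v); the process stops when x_u reaches 1, or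
all levels in N reach 1 (L = 1), or N is empty.\<close>
definition wf_step :: "'a set set \<Rightarrow> 'a set \<Rightarrow> 'a \<Rightarrow> ('a set \<Rightarrow> real) \<Rightarrow> ('a set \<Rightarrow> real) \<Rightarrow> bool" where
  "wf_step E N u x x' \<longleftrightarrow>
     (\<exists>L::real. L \<le> 1 \<and>
        level E x u + (\<Sum>v\<in>N. max 0 (L - level E x v)) \<le> 1 \<and>
        (level E x u + (\<Sum>v\<in>N. max 0 (L - level E x v)) = 1 \<or> L = 1 \<or> N = {}) \<and>
        x' = (\<lambda>e. x e + (\<Sum>v\<in>N. if e = {u, v} then max 0 (L - level E x v) else 0)))"

inductive wf_run :: "'a set set \<Rightarrow> 'a event list \<Rightarrow> ('a set \<Rightarrow> real) \<Rightarrow> ('a set \<Rightarrow> real) \<Rightarrow> bool"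
  for E where
  wf_nil: "wf_run E [] x x"
| wf_arr: "wf_run E es x x' \<Longrightarrow> wf_run E (Arrival v # es) x x'"
| wf_dl: "wf_step E {v. {u, v} \<in> E \<and> Deadline v \<in> set es} u x x' \<Longrightarrow> wf_run E es x' x''
          \<Longrightarrow> wf_run E (Deadline u # es) x x''"

definition bipartite :: "'a set set \<Rightarrow> bool" where
  "bipartite E \<longleftrightarrow> (\<exists>A. \<forall>e\<in>E. card (e \<inter> A) = 1)"

definition matching :: "'a set set \<Rightarrow> 'a set set \<Rightarrow> bool" where
  "matching E M \<longleftrightarrow> M \<subseteq> E \<and> (\<forall>e1\<in>M. \<forall>e2\<in>M. e1 \<noteq> e2 \<longrightarrow> e1 \<inter> e2 = {})"

definition max_matching_size :: "'a set set \<Rightarrow> nat" where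
  "max_matching_size E = Max (card ` {M. matching E M})"

end

theory Submission
  imports Defs
begin

text \<open>On \<open>G\<^sub>k\<^sub>,\<^sub>m\<close>, Water-Filling at the deadline of \<open>u\<^sub>t\<^sub>,\<^sub>i\<close> raises the \<open>k - i + H i\<close> remaining
  neighbours of \<open>u\<^sub>t\<^sub>,\<^sub>i\<close> (the \<open>v\<^sub>t\<^sub>,\<^sub>j\<close> with \<open>j \<ge> i\<close> and the \<open>u\<^sub>t\<^sub>+\<^sub>1\<^sub>,\<^sub>j\<close> with \<open>j < H i\<close>) uniformly.
  Giving each \<open>u\<^sub>t\<^sub>,\<^sub>i\<close> a rate \<open>y i\<close>, the water placed in such a step is paid for by the increase
  of \<open>\<Sum> rate * level\<close> over the \<open>u\<close>-vertices as soon as the rates satisfy a discrete dual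
  condition; hence the final fractional matching has value at most \<open>m * (\<Sum>i<k. y i) + k\<close>, while
  \<open>OPT = m * k\<close>.  Rates satisfying the dual condition with \<open>\<Sum>i<k. y i \<approx> (2 - sqrt 2) * k\<close> come
  from discretising the inverse \<open>W\<close> of a reparametrisation of the paper's \<open>f\<close>: its antiderivative \<open>Y\<close>
  satisfies \<open>Y 1 = 2 - sqrt 2\<close>.\<close>

section \<open>The threshold function and the dual profile\<close>

definition w_hi :: real where "w_hi = sqrt 2 / 2"
definition w_lo :: real where "w_lo = 1 - w_hi"

lemma w_hi_sq: "w_hi\<^sup>2 = 1/2"
  unfolding w_hi_def by (simp add: power_divide)

lemma w_hi_bounds: "1/2 < w_hi" "w_hi < 3/4"
proof -
  have pos: "0 \<le> w_hi" unfolding w_hi_def by simp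
  show "1/2 < w_hi"
    by (rule power_less_imp_less_base[of _ 2]) (use pos w_hi_sq in \<open>auto simp: power2_eq_square\<close>)
  show "w_hi < 3/4"
    by (rule power_less_imp_less_base[of _ 2]) (use w_hi_sq in \<open>auto simp: power2_eq_square\<close>)
qed

lemma w_lo_bounds: "0 < w_lo" "w_lo < w_hi"
  using w_hi_bounds unfolding w_lo_def by auto

definition Phi :: "real \<Rightarrow> real" where
  "Phi t = - ln t / 2 - ln (1 - t) / 2 + 1 / (2 * (1 - t))"

definition dPhi :: "real \<Rightarrow> real" where
  "dPhi t = (1 - 2 * (1 - t)\<^sup>2) / (2 * t * (1 - t)\<^sup>2)"

lemma Phi_has_derivative:
  assumes "0 < t" "t < 1"
  shows "(Phi has_real_derivative dPhi t) (at t)"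
proof -
  have "1 - t \<noteq> 0" "4 - t * 4 \<noteq> 0" "2 - 2 * t \<noteq> 0" using assms by auto
  then show ?thesis
    unfolding Phi_def dPhi_def using assms
    by (auto intro!: derivative_eq_intros)
      (simp add: divide_simps power2_eq_square, simp add: algebra_simps)
qed

lemma dPhi_nonneg:
  assumes "w_lo \<le> t" "t \<le> w_hi"
  shows "0 \<le> dPhi t"
proof -
  have "(1 - t)\<^sup>2 \<le> w_hi\<^sup>2"
    using assms w_lo_bounds by (intro power_mono) (auto simp: w_lo_def)
  moreover have "0 < t" "t < 1" using assms w_lo_bounds w_hi_bounds by auto
  ultimately show ?thesis unfolding dPhi_def using w_hi_sq by simp
qed

lemma dPhi_pos:
  assumes "w_lo < t" "t < w_hi"
  shows "0 < dPhi t"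
proof -
  have "(1 - t)\<^sup>2 < w_hi\<^sup>2"
    using assms w_lo_bounds by (intro power_strict_mono) (auto simp: w_lo_def)
  moreover have "0 < t" "t < 1" using assms w_lo_bounds w_hi_bounds by auto
  ultimately show ?thesis unfolding dPhi_def using w_hi_sq by simp
qed

lemma Phi_strict_mono:
  assumes "w_lo \<le> p" "p < q" "q \<le> w_hi"
  shows "Phi p < Phi q"
proof (rule DERIV_pos_imp_increasing_open[OF assms(2)])
  fix t assume "p < t" "t < q"
  then show "\<exists>y. DERIV Phi t :> y \<and> 0 < y"
    using assms w_lo_bounds w_hi_bounds
    by (intro exI[of _ "dPhi t"]) (auto intro!: Phi_has_derivative dPhi_pos)
next
  show "continuous_on {p..q} Phi"
    using assms w_lo_bounds w_hi_bounds
    by (intro continuous_at_imp_continuous_on ballI DERIV_isCont[OF Phi_has_derivative]) auto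
qed

lemma Phi_reflect:
  assumes "0 < w" "w < 1"
  shows "Phi (1 - w) - Phi w = 1 / (2 * w) - 1 / (2 * (1 - w))"
  unfolding Phi_def using assms by simp

text \<open>In the notation of the paper, \<open>Z t = f (1 - sqrt 2 * (1 - t))\<close>: the substitution
  maps \<open>[w_lo, w_hi]\<close> onto \<open>[0, c]\<close>, and with \<open>W = Z\<inverse>\<close> it turns the paper's threshold
  function into \<open>h x = Z (1 - W x)\<close>.\<close>

definition Z :: "real \<Rightarrow> real" where "Z w = Phi w_hi - Phi w"

lemma Z_w_hi: "Z w_hi = 0"
  unfolding Z_def by simp

lemma Z_w_lo: "Z w_lo = 1"
proof -
  have "Z w_lo = 1 / (2 * w_lo) - 1 / (2 * w_hi)"
    unfolding Z_def using Phi_reflect[of w_lo] w_lo_bounds w_hi_bounds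
    by (simp add: w_lo_def)
  also have "\<dots> = 1"
  proof -
    have "w_lo * w_hi = w_hi - 1/2" "2 * (w_lo * w_lo) - 4 * w_lo + 1 = 0"
      unfolding w_lo_def using w_hi_sq by (simp_all add: algebra_simps power2_eq_square)
    then show ?thesis using w_lo_bounds w_hi_bounds
      by (simp add: divide_simps) (simp add: algebra_simps w_lo_def)
  qed
  finally show ?thesis .
qed

lemma Z_strict_antimono: "w_lo \<le> p \<Longrightarrow> p < q \<Longrightarrow> q \<le> w_hi \<Longrightarrow> Z q < Z p"
  unfolding Z_def using Phi_strict_mono by simp

lemma Z_antimono: "w_lo \<le> p \<Longrightarrow> p \<le> q \<Longrightarrow> q \<le> w_hi \<Longrightarrow> Z q \<le> Z p"
  using Z_strict_antimono by (cases "p = q") (auto intro: less_imp_le)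

lemma Z_range:
  assumes "w_lo \<le> w" "w \<le> w_hi"
  shows "0 \<le> Z w" "Z w \<le> 1"
  using Z_antimono[of w w_hi] Z_antimono[of w_lo w] assms Z_w_hi Z_w_lo by auto

lemma Z_inj: "w_lo \<le> p \<Longrightarrow> p \<le> w_hi \<Longrightarrow> w_lo \<le> q \<Longrightarrow> q \<le> w_hi \<Longrightarrow> Z p = Z q \<Longrightarrow> p = q"
  using Z_strict_antimono by (metis less_irrefl linorder_neqE_linordered_idom)

lemma Z_surj:
  assumes "0 \<le> x" "x \<le> 1"
  shows "\<exists>w. w_lo \<le> w \<and> w \<le> w_hi \<and> Z w = x"
proof (rule IVT2[of Z w_hi x w_lo])
  show "\<forall>t. w_lo \<le> t \<and> t \<le> w_hi \<longrightarrow> isCont Z t"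
    unfolding Z_def using w_lo_bounds w_hi_bounds
    by (auto intro!: isCont_diff DERIV_isCont[OF Phi_has_derivative])
qed (use assms Z_w_hi Z_w_lo w_lo_bounds in auto)

definition W :: "real \<Rightarrow> real" where "W x = (THE w. w_lo \<le> w \<and> w \<le> w_hi \<and> Z w = x)"

lemma W_spec:
  assumes "0 \<le> x" "x \<le> 1"
  shows "w_lo \<le> W x \<and> W x \<le> w_hi \<and> Z (W x) = x"
  unfolding W_def by (rule theI') (use Z_surj[OF assms] Z_inj in blast)

lemma W_range: "0 \<le> x \<Longrightarrow> x \<le> 1 \<Longrightarrow> w_lo \<le> W x" "0 \<le> x \<Longrightarrow> x \<le> 1 \<Longrightarrow> W x \<le> w_hi"
  using W_spec by blast+

lemma Z_W: "0 \<le> x \<Longrightarrow> x \<le> 1 \<Longrightarrow> Z (W x) = x"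
  using W_spec by blast

lemma W_Z: "w_lo \<le> w \<Longrightarrow> w \<le> w_hi \<Longrightarrow> W (Z w) = w"
  using W_range[of "Z w"] Z_W[of "Z w"] Z_range Z_inj by metis

lemma W_antimono:
  assumes "0 \<le> x" "x \<le> x'" "x' \<le> 1"
  shows "W x' \<le> W x"
proof (rule ccontr)
  assume "\<not> W x' \<le> W x"
  then have "Z (W x') < Z (W x)"
    using W_range[of x] W_range[of x'] assms by (intro Z_strict_antimono) auto
  then show False using Z_W[of x] Z_W[of x'] assms by auto
qed

definition Yw :: "real \<Rightarrow> real" where "Yw w = w + (1/2 - w) / (1 - w)"

text \<open>Since \<open>Yw' t = t * Z' t\<close>, the function \<open>Y = Yw \<circ> W\<close> below is an antiderivative of \<open>W\<close>.\<close>

lemma Yw_minus_Z_has_derivative: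
  assumes "0 < t" "t < 1"
  shows "((\<lambda>t. Yw t - c * Z t) has_real_derivative (c - t) * dPhi t) (at t)"
proof -
  have "((\<lambda>t. Yw t - c * Z t) has_real_derivative
      (1 + (-1 * (1 - t) - (1/2 - t) * (-1)) / (1 - t)\<^sup>2) - c * (0 - dPhi t)) (at t)"
    unfolding Yw_def Z_def using assms
    by (auto intro!: derivative_eq_intros Phi_has_derivative simp: power2_eq_square)
  moreover have "(1 + (-1 * (1 - t) - (1/2 - t) * (-1)) / (1 - t)\<^sup>2) - c * (0 - dPhi t)
      = (c - t) * dPhi t"
    using assms unfolding dPhi_def
    by (simp add: divide_simps power2_eq_square) (simp add: algebra_simps)
  ultimately show ?thesis by simp
qed

lemma Yw_chord:
  assumes "w_lo \<le> w" "w \<le> w'" "w' \<le> w_hi"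
  shows "w * (Z w - Z w') \<le> Yw w - Yw w'" "Yw w - Yw w' \<le> w' * (Z w - Z w')"
proof -
  have "Yw w' - w * Z w' \<le> Yw w - w * Z w"
  proof (rule DERIV_nonpos_imp_nonincreasing[OF assms(2)])
    fix t assume "w \<le> t" "t \<le> w'"
    then show "\<exists>y. DERIV (\<lambda>t. Yw t - w * Z t) t :> y \<and> y \<le> 0"
      using assms w_lo_bounds w_hi_bounds dPhi_nonneg[of t]
      by (intro exI[of _ "(w - t) * dPhi t"])
        (auto intro!: Yw_minus_Z_has_derivative mult_nonpos_nonneg)
  qed
  then show "w * (Z w - Z w') \<le> Yw w - Yw w'" by (simp add: algebra_simps)
  have "Yw w - w' * Z w \<le> Yw w' - w' * Z w'"
  proof (rule DERIV_nonneg_imp_nondecreasing[OF assms(2)])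
    fix t assume "w \<le> t" "t \<le> w'"
    then show "\<exists>y. DERIV (\<lambda>t. Yw t - w' * Z t) t :> y \<and> y \<ge> 0"
      using assms w_lo_bounds w_hi_bounds dPhi_nonneg[of t]
      by (intro exI[of _ "(w' - t) * dPhi t"]) (auto intro!: Yw_minus_Z_has_derivative)
  qed
  then show "Yw w - Yw w' \<le> w' * (Z w - Z w')" by (simp add: algebra_simps)
qed

definition Y :: "real \<Rightarrow> real" where "Y x = Yw (W x)"
definition h :: "real \<Rightarrow> real" where "h x = Z (1 - W x)"

lemma Y_chord:
  assumes "0 \<le> x'" "x' \<le> x" "x \<le> 1"
  shows "W x * (x - x') \<le> Y x - Y x'" "Y x - Y x' \<le> W x' * (x - x')"
  using Yw_chord[of "W x" "W x'"] W_range[of x] W_range[of x'] Z_W[of x] Z_W[of x']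
    W_antimono[of x' x] assms
  unfolding Y_def by auto

lemma Y_0: "Y 0 = 0"
proof -
  have "W 0 = w_hi" using W_Z[of w_hi] Z_w_hi w_lo_bounds by simp
  moreover have "Yw w_hi = 0"
    unfolding Yw_def using w_hi_sq w_hi_bounds
    by (simp add: divide_simps power2_eq_square) (simp add: algebra_simps)
  ultimately show ?thesis unfolding Y_def by simp
qed

lemma Y_1: "Y 1 = 2 - sqrt 2"
proof -
  have "W 1 = w_lo" using W_Z[of w_lo] Z_w_lo w_lo_bounds by simp
  moreover have "Yw w_lo = 2 - sqrt 2"
  proof -
    have "sqrt 2 = 2 * w_hi" unfolding w_hi_def by simp
    then show ?thesis unfolding Yw_def w_lo_def using w_hi_sq w_hi_bounds
      by (simp add: divide_simps power2_eq_square) (simp add: algebra_simps)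
  qed
  ultimately show ?thesis unfolding Y_def by simp
qed

lemma h_range: "0 \<le> x \<Longrightarrow> x \<le> 1 \<Longrightarrow> 0 \<le> h x \<and> h x \<le> 1"
  unfolding h_def using W_range[of x] Z_range[of "1 - W x"] by (auto simp: w_lo_def)

lemma h_antimono:
  assumes "0 \<le> x" "x \<le> x'" "x' \<le> 1"
  shows "h x' \<le> h x"
  unfolding h_def using W_range[of x] W_range[of x'] W_antimono[OF assms] assms
  by (intro Z_antimono) (auto simp: w_lo_def)

lemma Y_increment_le:
  assumes "0 \<le> x'" "x' \<le> x" "x \<le> 1"
  shows "Y x - Y x' \<le> x - x'"
proof -
  have "W x' * (x - x') \<le> 1 * (x - x')"
    using W_range[of x'] w_hi_bounds assms by (intro mult_right_mono) auto
  then show ?thesis using Y_chord(2)[OF assms] by simp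
qed

text \<open>The tangent to \<open>Y\<close> at \<open>h x\<close>, of slope \<open>W (h x) = 1 - W x\<close>, passes through \<open>(x - 1, 0)\<close>.
  This is what makes the dual condition hold with equality in the limit \<open>k \<rightarrow> \<infinity>\<close>.\<close>

lemma Y_h:
  assumes "0 \<le> x" "x \<le> 1"
  shows "Y (h x) = (1 - W x) * (1 - x + h x)"
proof -
  define w where "w = W x"
  have w: "w_lo \<le> w" "w \<le> w_hi" "Z w = x"
    using W_range[OF assms] Z_W[OF assms] unfolding w_def by auto
  have "W (h x) = 1 - w"
    unfolding h_def w_def[symmetric] using w by (intro W_Z) (auto simp: w_lo_def)
  then have "Y (h x) = Yw (1 - w)" unfolding Y_def by simp
  also have "\<dots> = (1 - w) * (1 - (1 / (2 * w) - 1 / (2 * (1 - w))))"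
    using w w_lo_bounds w_hi_bounds unfolding Yw_def
    by (simp add: divide_simps) (simp add: algebra_simps)
  also have "1 / (2 * w) - 1 / (2 * (1 - w)) = x - h x"
    using Phi_reflect[of w] w w_lo_bounds w_hi_bounds unfolding h_def Z_def w_def[symmetric]
    by auto
  finally show ?thesis unfolding w_def by simp
qed


section \<open>A discrete dual certificate\<close>

text \<open>The dual condition at \<open>i\<close> covers the deadline of \<open>u\<^sub>t\<^sub>,\<^sub>i\<close>: there Water-Filling spreads
  water equally over \<open>k - i + H i\<close> neighbours, and charging it at rate \<open>y i\<close> to \<open>u\<^sub>t\<^sub>,\<^sub>i\<close> and at
  rate \<open>y j\<close> to \<open>u\<^sub>t\<^sub>+\<^sub>1\<^sub>,\<^sub>j\<close> (\<open>j < H i\<close>) pays for all of it.\<close>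

locale dual_profile =
  fixes k :: nat and H :: "nat \<Rightarrow> nat" and y :: "nat \<Rightarrow> real"
  assumes k_pos: "0 < k"
    and H_antimono: "i \<le> j \<Longrightarrow> j < k \<Longrightarrow> H j \<le> H i"
    and H_le: "i < k \<Longrightarrow> H i \<le> k"
    and y_nonneg: "i < k \<Longrightarrow> 0 \<le> y i"
    and y_le_1: "i < k \<Longrightarrow> y i \<le> 1"
    and dual: "i < k \<Longrightarrow> real (k - i + H i) \<le> real (k - i + H i) * y i + (\<Sum>j<H i. y j)"

text \<open>The rate \<open>y j\<close> approximates \<open>(1 + \<delta>) * W (j / k)\<close>; the factor \<open>1 + \<delta>\<close> absorbs the
  rounding errors, and the last \<open>\<delta> * k\<close> positions, where \<open>1 - x + h x\<close> gets small, are given rate \<open>1\<close>.\<close>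

locale discretisation =
  fixes k :: nat and \<delta> :: real
  assumes \<delta>_pos: "0 < \<delta>" and \<delta>_le: "\<delta> \<le> 1/4" and k_large: "4 \<le> real k * \<delta>\<^sup>2"
begin

definition K0 :: nat where "K0 = nat \<lfloor>real k * (1 - \<delta>)\<rfloor>"

definition D :: "nat \<Rightarrow> real" where "D j = Y (real (Suc j) / k) - Y (real j / k)"

definition y :: "nat \<Rightarrow> real" where "y j = (if j < K0 then (1 + \<delta>) * k * D j else 1)"

definition H :: "nat \<Rightarrow> nat" where
  "H i = (if i < K0 then nat \<lfloor>real k * h (real (Suc i) / k)\<rfloor> else 0)"

lemma k_pos: "0 < real k"
  using k_large \<delta>_pos by (cases "k = 0") auto

lemma k\<delta>_ge_1: "1 \<le> real k * \<delta>"
proof -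
  have "real k * \<delta>\<^sup>2 \<le> real k * \<delta>"
    using \<delta>_pos \<delta>_le k_pos by (intro mult_left_mono) (auto simp: power2_eq_square)
  then show ?thesis using k_large by linarith
qed

lemma K0_bounds: "K0 \<le> k" "real K0 \<le> real k * (1 - \<delta>)" "real k * (1 - \<delta>) - 1 < real K0"
proof -
  have "0 \<le> real k * (1 - \<delta>)" using k_pos \<delta>_le by simp
  then show "real K0 \<le> real k * (1 - \<delta>)" "real k * (1 - \<delta>) - 1 < real K0"
    unfolding K0_def by linarith+
  moreover have "real k * (1 - \<delta>) \<le> real k" using \<delta>_pos k_pos by simp
  ultimately show "K0 \<le> k" by linarith
qed

lemma D_bounds:
  assumes "j < k"
  shows "W (real (Suc j) / k) / k \<le> D j" "D j \<le> w_hi / k"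
proof -
  have x: "0 \<le> real j / k" "real j / k \<le> real (Suc j) / k" "real (Suc j) / k \<le> 1"
    using assms k_pos by (auto simp: divide_simps)
  have "real (Suc j) / k - real j / k = 1 / k" using k_pos by (simp add: divide_simps)
  then show "W (real (Suc j) / k) / k \<le> D j" "D j \<le> w_hi / k"
    using Y_chord[OF x] W_range[of "real j / k"] x k_pos unfolding D_def
    by (auto simp: divide_simps mult.commute intro: order.trans)
qed

lemma D_nonneg:
  assumes "j < k"
  shows "0 \<le> D j"
proof -
  have "0 \<le> W (real (Suc j) / k)"
    using W_range(1)[of "real (Suc j) / k"] w_lo_bounds assms k_pos by (simp add: divide_simps)
  then show ?thesis using D_bounds(1)[OF assms] k_pos by (meson divide_nonneg_nonneg of_nat_0_le_iff order_trans)
qed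

lemma scaled_D_le_1:
  assumes "j < k"
  shows "(1 + \<delta>) * k * D j \<le> 1"
proof -
  have "(1 + \<delta>) * k * D j \<le> (1 + \<delta>) * k * (w_hi / k)"
    using D_bounds(2)[OF assms] \<delta>_pos k_pos by (intro mult_left_mono) auto
  also have "\<dots> = (1 + \<delta>) * w_hi" using k_pos by simp
  also have "\<dots> \<le> (5/4) * (3/4)"
    using w_hi_bounds \<delta>_le \<delta>_pos by (intro mult_mono) auto
  finally show ?thesis by simp
qed

lemma y_bounds:
  assumes "j < k"
  shows "0 \<le> y j" "y j \<le> 1" "(1 + \<delta>) * k * D j \<le> y j"
  unfolding y_def using D_nonneg[OF assms] scaled_D_le_1[OF assms] \<delta>_pos by auto

lemma y_ge_W:
  assumes "i < K0"
  shows "(1 + \<delta>) * W (real (Suc i) / k) \<le> y i"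
proof -
  have "W (real (Suc i) / k) \<le> real k * D i"
    using D_bounds(1)[of i] assms K0_bounds k_pos by (simp add: divide_simps mult.commute)
  then show ?thesis
    unfolding y_def using assms \<delta>_pos by (simp add: mult.assoc mult_left_mono)
qed

lemma sum_scaled_D: "(\<Sum>j<n. (1 + \<delta>) * k * D j) = (1 + \<delta>) * k * Y (real n / k)"
  unfolding D_def sum_distrib_left[symmetric]
  using sum_lessThan_telescope[of "\<lambda>j. Y (real j / k)" n] Y_0 by simp

lemma sum_y_ge_Y:
  assumes "n \<le> k"
  shows "(1 + \<delta>) * k * Y (real n / k) \<le> (\<Sum>j<n. y j)"
  unfolding sum_scaled_D[symmetric] using assms y_bounds(3) by (intro sum_mono) auto

lemma sum_y_floor_ge:
  assumes "0 \<le> t" "t \<le> 1"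
  shows "(1 + \<delta>) * (k * Y t - 1) \<le> (\<Sum>j<nat \<lfloor>real k * t\<rfloor>. y j)"
proof -
  define n where "n = nat \<lfloor>real k * t\<rfloor>"
  have "real n = \<lfloor>real k * t\<rfloor>" unfolding n_def using assms k_pos by simp
  then have n: "real n \<le> real k * t" "real k * t - 1 < real n" by linarith+
  have "n \<le> k" using n(1) assms k_pos
    by (metis mult_left_le of_nat_le_iff order_trans of_nat_0_le_iff)
  have t: "0 \<le> real n / k" "real n / k \<le> t"
    using n k_pos by (auto simp: divide_simps mult.commute)
  have "real k * (Y t - Y (real n / k)) \<le> real k * (t - real n / k)"
    using Y_increment_le[OF t assms(2)] k_pos by simp
  also have "\<dots> \<le> 1" using n k_pos by (simp add: algebra_simps)
  finally have "k * Y t - 1 \<le> k * Y (real n / k)" by (simp add: algebra_simps)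
  then have "(1 + \<delta>) * (k * Y t - 1) \<le> (1 + \<delta>) * k * Y (real n / k)"
    using \<delta>_pos by (simp add: mult.assoc mult_left_mono)
  then show ?thesis using sum_y_ge_Y[OF \<open>n \<le> k\<close>] unfolding n_def by linarith
qed

lemma H_antimono:
  assumes "i \<le> j" "j < k"
  shows "H j \<le> H i"
proof (cases "j < K0")
  case True
  have "h (real (Suc j) / k) \<le> h (real (Suc i) / k)"
    using assms K0_bounds True k_pos by (intro h_antimono) (auto simp: divide_simps)
  then show ?thesis
    unfolding H_def using True assms k_pos by (auto intro!: nat_mono floor_mono)
qed (simp add: H_def)

lemma H_le:
  assumes "i < k"
  shows "H i \<le> k"
proof (cases "i < K0")
  case True
  then have "h (real (Suc i) / k) \<le> 1"
    using h_range K0_bounds k_pos by (simp add: divide_simps)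
  then have "\<lfloor>real k * h (real (Suc i) / k)\<rfloor> \<le> int k"
    using k_pos by (metis floor_mono floor_of_nat mult_left_le of_nat_0_le_iff)
  then show ?thesis unfolding H_def by (simp add: nat_le_iff)
qed (simp add: H_def)

lemma degree_bounds:
  assumes "i < K0"
  defines "x \<equiv> real (Suc i) / k"
  shows "real k * (1 - x + h x) \<le> real (k - i + H i)"
    and "real (k - i + H i) \<le> real k * (1 - x + h x) + 1"
proof -
  have "0 \<le> x" "x \<le> 1" unfolding x_def using assms K0_bounds k_pos by (auto simp: divide_simps)
  then have "real (H i) = \<lfloor>real k * h x\<rfloor>"
    unfolding H_def x_def using assms h_range k_pos by simp
  moreover have "real (k - i + H i) = real k - real i + real (H i)"
    using assms K0_bounds by simp
  moreover have "real k * x = real i + 1" unfolding x_def using k_pos by simp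
  ultimately show "real k * (1 - x + h x) \<le> real (k - i + H i)"
    and "real (k - i + H i) \<le> real k * (1 - x + h x) + 1"
    by (simp_all add: algebra_simps) linarith+
qed

lemma dual_below_K0:
  assumes "i < K0"
  shows "real (k - i + H i) \<le> real (k - i + H i) * y i + (\<Sum>j<H i. y j)"
proof -
  define x where "x = real (Suc i) / k"
  define n where "n = real (k - i + H i)"
  have x: "0 \<le> x" "x \<le> 1 - \<delta>"
    unfolding x_def using K0_bounds assms k_pos by (auto simp: divide_simps mult.commute)
  then have x1: "x \<le> 1" using \<delta>_pos by linarith
  have w: "w_lo \<le> W x" "W x \<le> w_hi" using W_range[OF x(1) x1] by auto
  have hx: "0 \<le> h x" "h x \<le> 1" using h_range[OF x(1) x1] by auto
  have Hi: "H i = nat \<lfloor>real k * h x\<rfloor>" unfolding H_def x_def using assms by simp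
  have n_bounds: "real k * (1 - x + h x) \<le> n" "n \<le> real k * (1 - x + h x) + 1"
    using degree_bounds[OF assms] unfolding x_def n_def by auto
  have n_large: "2 * (1 + \<delta>) \<le> n * \<delta>"
  proof -
    have "real k * \<delta> \<le> real k * (1 - x + h x)" using x hx k_pos by simp
    then have "real k * \<delta> * \<delta> \<le> n * \<delta>" using n_bounds \<delta>_pos by (simp add: mult_right_mono)
    then show ?thesis using k_large \<delta>_le by (simp add: power2_eq_square mult.assoc)
  qed
  have "n * ((1 + \<delta>) * W x) \<le> n * y i"
    using y_ge_W[OF assms] unfolding x_def n_def by (intro mult_left_mono) auto
  moreover have "(1 + \<delta>) * ((1 - W x) * (n - 1) - 1) \<le> (\<Sum>j<H i. y j)"
  proof -
    have "(1 - W x) * (n - 1) \<le> (1 - W x) * (real k * (1 - x + h x))"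
      using n_bounds w w_hi_bounds by (intro mult_left_mono) auto
    also have "\<dots> = real k * Y (h x)" using Y_h[OF x(1) x1] by simp
    finally have "(1 + \<delta>) * ((1 - W x) * (n - 1) - 1) \<le> (1 + \<delta>) * (real k * Y (h x) - 1)"
      using \<delta>_pos by (intro mult_left_mono) auto
    then show ?thesis using sum_y_floor_ge[OF hx] unfolding Hi by linarith
  qed
  moreover have "n * ((1 + \<delta>) * W x) + (1 + \<delta>) * ((1 - W x) * (n - 1) - 1)
      = (1 + \<delta>) * (n - 2) + (1 + \<delta>) * W x"
    by (simp add: algebra_simps)
  moreover have "0 \<le> (1 + \<delta>) * W x" using w w_lo_bounds \<delta>_pos by simp
  moreover have "n \<le> (1 + \<delta>) * (n - 2)" using n_large by (simp add: algebra_simps)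
  ultimately show ?thesis unfolding n_def by linarith
qed

lemma dual_profile: "dual_profile k H y"
proof
  show "0 < k" using k_pos by simp
next
  fix i
  show "real (k - i + H i) \<le> real (k - i + H i) * y i + (\<Sum>j<H i. y j)"
  proof (cases "i < K0")
    case True
    then show ?thesis by (rule dual_below_K0)
  next
    case False
    then show ?thesis by (simp add: H_def y_def)
  qed
qed (use H_antimono H_le y_bounds in auto)

lemma sum_y_le: "(\<Sum>j<k. y j) \<le> (2 - sqrt 2 + 3 * \<delta>) * k"
proof -
  have "(\<Sum>j<k. y j) \<le> (\<Sum>j<k. (1 + \<delta>) * k * D j + (if K0 \<le> j then 1 else 0))"
    using D_nonneg \<delta>_pos k_pos unfolding y_def by (intro sum_mono) auto
  also have "\<dots> = (1 + \<delta>) * k * (2 - sqrt 2) + real (k - K0)"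
  proof -
    have "{j. j < k} \<inter> Collect ((\<le>) K0) = {K0..<k}" by auto
    then show ?thesis
      unfolding sum.distrib sum_scaled_D using k_pos Y_1 by (simp add: sum.If_cases lessThan_def)
  qed
  also have "\<dots> \<le> (2 - sqrt 2 + 3 * \<delta>) * k"
  proof -
    have "(1 + \<delta>) * (2 - sqrt 2) \<le> 2 - sqrt 2 + \<delta>"
      using w_hi_bounds \<delta>_pos unfolding w_hi_def by (simp add: algebra_simps)
    then have "(1 + \<delta>) * k * (2 - sqrt 2) \<le> (2 - sqrt 2 + \<delta>) * k"
      using k_pos by (metis mult.commute mult.left_commute mult_right_mono of_nat_0_le_iff)
    moreover have "real (k - K0) \<le> real k * \<delta> + 1"
      using K0_bounds by (simp add: algebra_simps)
    ultimately show ?thesis using k\<delta>_ge_1 by (simp add: algebra_simps)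
  qed
  finally show ?thesis .
qed

end

lemma dual_profile_exists:
  assumes "0 < \<epsilon>"
  shows "\<exists>k H y. dual_profile k H y \<and> (\<Sum>j<k. y j) \<le> (2 - sqrt 2 + \<epsilon>) * k"
proof -
  define \<delta> where "\<delta> = min (\<epsilon> / 3) (1/4)"
  define k where "k = nat \<lceil>4 / \<delta>\<^sup>2\<rceil>"
  have \<delta>: "0 < \<delta>" "\<delta> \<le> 1/4" "3 * \<delta> \<le> \<epsilon>" using assms unfolding \<delta>_def by auto
  have "4 / \<delta>\<^sup>2 \<le> real k" unfolding k_def by linarith
  then have "4 \<le> real k * \<delta>\<^sup>2" using \<delta> by (simp add: pos_divide_le_eq)
  then interpret discretisation k \<delta>
    using \<delta> by unfold_locales auto
  have "(2 - sqrt 2 + 3 * \<delta>) * k \<le> (2 - sqrt 2 + \<epsilon>) * k"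
    using \<delta>(3) by (intro mult_right_mono) auto
  then have "(\<Sum>j<k. y j) \<le> (2 - sqrt 2 + \<epsilon>) * k" using sum_y_le by linarith
  then show ?thesis using dual_profile by blast
qed

section \<open>Water-Filling steps with uniform levels\<close>

definition add_star :: "'a \<Rightarrow> 'a set \<Rightarrow> real \<Rightarrow> ('a set \<Rightarrow> real) \<Rightarrow> 'a set \<Rightarrow> real" where
  "add_star u N d x = (\<lambda>e. x e + (\<Sum>v\<in>N. if e = {u, v} then d else 0))"

lemma level_add_star:
  fixes d :: real
  assumes "finite E" "finite N" "u \<notin> N" "\<forall>v\<in>N. {u, v} \<in> E"
  shows "level E (add_star u N d x) w =
         level E x w + (if w = u then card N * d else if w \<in> N then d else 0)"
proof -
  let ?Ew = "{e\<in>E. w \<in> e}"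
  have "finite ?Ew" using assms(1) by simp
  have "level E (add_star u N d x) w
      = level E x w + (\<Sum>v\<in>N. \<Sum>e\<in>?Ew. if e = {u, v} then d else 0)"
    unfolding level_def add_star_def by (simp add: sum.distrib sum.swap[of _ ?Ew])
  also have "(\<Sum>v\<in>N. \<Sum>e\<in>?Ew. if e = {u, v} then d else 0) = (\<Sum>v\<in>N. if w \<in> {u, v} then d else 0)"
    using assms(4) \<open>finite ?Ew\<close> by (intro sum.cong) auto
  also have "\<dots> = (if w = u then card N * d else if w \<in> N then d else 0)"
    using assms(2,3) by (cases "w = u") (auto simp: sum.If_cases Int_absorb1)
  finally show ?thesis .
qed

lemma sum_add_star:
  fixes d :: real
  assumes "finite E" "\<forall>v\<in>N. {u, v} \<in> E"
  shows "(\<Sum>e\<in>E. add_star u N d x e) = (\<Sum>e\<in>E. x e) + card N * d"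
proof -
  have "(\<Sum>e\<in>E. \<Sum>v\<in>N. if e = {u, v} then d else 0) = (\<Sum>v\<in>N. \<Sum>e\<in>E. if e = {u, v} then d else 0)"
    by (rule sum.swap)
  also have "\<dots> = card N * d"
    using assms by simp
  finally show ?thesis unfolding add_star_def by (simp add: sum.distrib)
qed

lemma wf_step_uniform:
  assumes "wf_step E N u x x'" "\<forall>v\<in>N. level E x v = \<sigma>" "\<sigma> \<le> 1"
  shows "\<exists>d::real. 0 \<le> d \<and> x' = add_star u N d x \<and> level E x u + card N * d \<le> 1 \<and> \<sigma> + d \<le> 1"
proof -
  obtain L where L: "L \<le> 1" "level E x u + (\<Sum>v\<in>N. max 0 (L - level E x v)) \<le> 1"
    "x' = (\<lambda>e. x e + (\<Sum>v\<in>N. if e = {u, v} then max 0 (L - level E x v) else 0))"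
    using assms(1) unfolding wf_step_def by blast
  define d where "d = max 0 (L - \<sigma>)"
  have "x' = add_star u N d x"
    unfolding L(3) add_star_def d_def using assms(2) by (intro ext) (auto intro!: sum.cong)
  moreover have "(\<Sum>v\<in>N. max 0 (L - level E x v)) = card N * d"
    using assms(2) unfolding d_def by simp
  moreover have "0 \<le> d" "\<sigma> + d \<le> 1" unfolding d_def using L(1) assms(3) by auto
  ultimately show ?thesis using L(2) by auto
qed

lemma wf_step_exists_uniform:
  assumes "finite N" "N \<noteq> {}" "\<forall>v\<in>N. level E x v = \<sigma>" "\<sigma> \<le> 1" "level E x u \<le> 1"
  shows "\<exists>x'. wf_step E N u x x'"
proof -
  define p where "p = level E x u"
  define n where "n = real (card N)"
  have n: "0 < n" using assms(1,2) unfolding n_def by (simp add: card_gt_0_iff)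
  define L where "L = min 1 (\<sigma> + (1 - p) / n)"
  have "\<sigma> \<le> L" unfolding L_def using assms(4,5) n p_def by auto
  then have sum: "(\<Sum>v\<in>N. max 0 (L - level E x v)) = n * (L - \<sigma>)"
    using assms(3) unfolding n_def by simp
  have "n * (L - \<sigma>) \<le> n * ((1 - p) / n)"
    using n unfolding L_def by (intro mult_left_mono) auto
  then have "p + n * (L - \<sigma>) \<le> 1" using n by simp
  moreover have "p + n * (L - \<sigma>) = 1 \<or> L = 1"
    using n unfolding L_def by (cases "\<sigma> + (1 - p) / n \<le> 1") auto
  ultimately show ?thesis
    unfolding wf_step_def using sum p_def L_def by (intro exI[of _ L] exI) auto
qed

lemma wf_step_empty_iff: "wf_step E {} u x x' \<longleftrightarrow> x' = x \<and> level E x u \<le> 1"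
  unfolding wf_step_def by (auto intro!: exI[of _ 1])

lemma wf_run_Nil_iff: "wf_run E [] x x' \<longleftrightarrow> x' = x"
  by (auto elim: wf_run.cases intro: wf_run.intros)

lemma wf_run_Arrival_iff: "wf_run E (Arrival v # es) x x' \<longleftrightarrow> wf_run E es x x'"
  by (auto elim: wf_run.cases intro: wf_run.intros)

lemma wf_run_Deadline_iff:
  "wf_run E (Deadline u # es) x x'' \<longleftrightarrow>
   (\<exists>x'. wf_step E {v. {u, v} \<in> E \<and> Deadline v \<in> set es} u x x' \<and> wf_run E es x' x'')"
  by (auto elim: wf_run.cases intro: wf_run.intros)

lemma wf_run_Arrivals_iff: "wf_run E (map Arrival vs @ es) x x' \<longleftrightarrow> wf_run E es x x'"
  by (induction vs) (auto simp: wf_run_Arrival_iff)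

section \<open>The hard instance\<close>

lemma before_append: "a \<in> set xs \<Longrightarrow> b \<in> set ys \<Longrightarrow> before (xs @ ys) a b"
proof -
  assume "a \<in> set xs" "b \<in> set ys"
  then obtain i j where "i < length xs" "xs ! i = a" "j < length ys" "ys ! j = b"
    by (auto simp: in_set_conv_nth)
  then show ?thesis
    unfolding before_def by (intro exI[of _ i] exI[of _ "length xs + j"]) (auto simp: nth_append)
qed

lemma Suc_double_neq_double [simp]: "Suc (2 * a) \<noteq> 2 * b" "2 * b \<noteq> Suc (2 * a)"
  for a b :: nat
  by presburger+

lemma card_doubleton_Int_eq_1:
  assumes "a \<noteq> b" "(a \<in> A) \<noteq> (b \<in> A)"
  shows "card ({a, b} \<inter> A) = 1"
proof -
  have "{a, b} \<inter> A = {a} \<or> {a, b} \<inter> A = {b}" using assms by auto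
  then show ?thesis by auto
qed

text \<open>Vertex \<open>u\<^sub>t\<^sub>,\<^sub>i\<close> of \<open>G\<^sub>k\<^sub>,\<^sub>m\<close> is \<open>2 * s\<close> and \<open>v\<^sub>t\<^sub>,\<^sub>i\<close> is \<open>2 * s + 1\<close>, where \<open>s = t * k + i\<close>
  with indices from \<open>0\<close>; \<open>u\<^sub>t\<^sub>,\<^sub>i\<close> is joined to \<open>u\<^sub>t\<^sub>+\<^sub>1\<^sub>,\<^sub>j\<close> for \<open>j < H i\<close>.  The rate of \<open>u\<^sub>t\<^sub>,\<^sub>i\<close> is
  \<open>y i\<close>, except in the last block, whose \<open>u\<close>-vertices have no successors to share the charge.\<close>

locale hard_instance = dual_profile +
  fixes m :: nat
  assumes m_pos: "0 < m"
begin

definition V :: "nat set" where "V = {..<2*m*k}"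

definition E :: "nat set set" where
  "E = {{2*r, 2*s+1} | r s. s < m*k \<and> r \<le> s \<and> s div k = r div k} \<union>
       {{2*r, 2*s} | r s. s < m*k \<and> s div k = Suc (r div k) \<and> s mod k < H (r mod k)}"

definition rest :: "nat \<Rightarrow> nat event list" where
  "rest r = map (\<lambda>s. Deadline (2*s)) [r..<m*k] @ map (\<lambda>s. Deadline (2*s+1)) [0..<m*k]"

definition evs :: "nat event list" where "evs = map Arrival [0..<2*m*k] @ rest 0"

definition NV :: "nat \<Rightarrow> nat set" where "NV r = {s. r \<le> s \<and> s < m*k \<and> s div k = r div k}"

definition NU :: "nat \<Rightarrow> nat set" where
  "NU r = {s. s < m*k \<and> s div k = Suc (r div k) \<and> s mod k < H (r mod k)}"

definition N :: "nat \<Rightarrow> nat set" where "N r = (\<lambda>s. 2*s+1) ` NV r \<union> (\<lambda>s. 2*s) ` NU r"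

definition rate :: "nat \<Rightarrow> real" where "rate s = (if Suc (s div k) = m then 1 else y (s mod k))"

lemma less_if_next_block: "s div k = Suc (r div k) \<Longrightarrow> r < s"
  by (metis Suc_n_not_le_n div_le_mono linorder_not_less)

lemma block_div_mod: "j < k \<Longrightarrow> (q * k + j) div k = q" "j < k \<Longrightarrow> (q * k + j) mod k = j"
  by simp_all

lemma div_eq_iff: "s div k = q \<longleftrightarrow> q * k \<le> s \<and> s < Suc q * k"
proof -
  have "s div k = q \<longleftrightarrow> \<not> s div k < q \<and> s div k < Suc q" by arith
  then show ?thesis using div_less_iff_less_mult[OF k_pos] by (simp add: not_less)
qed

lemma V_iff: "w \<in> V \<longleftrightarrow> (\<exists>s<m*k. w = 2*s) \<or> (\<exists>s<m*k. w = 2*s+1)"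
proof
  assume "w \<in> V"
  then show "(\<exists>s<m*k. w = 2*s) \<or> (\<exists>s<m*k. w = 2*s+1)"
    unfolding V_def by (cases "even w") (auto intro!: exI[of _ "w div 2"])
qed (auto simp: V_def)

lemma E_subset: "E \<subseteq> {{u, v} | u v. u \<in> V \<and> v \<in> V \<and> u \<noteq> v}"
proof
  fix e assume "e \<in> E"
  then consider (vert) r s where "e = {2*r, 2*s+1}" "s < m*k" "r \<le> s"
    | (horiz) r s where "e = {2*r, 2*s}" "s < m*k" "s div k = Suc (r div k)"
    unfolding E_def by blast
  then show "e \<in> {{u, v} | u v. u \<in> V \<and> v \<in> V \<and> u \<noteq> v}"
  proof cases
    case vert
    then show ?thesis unfolding V_def by (intro CollectI exI[of _ "2*r"] exI[of _ "2*s+1"]) auto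
  next
    case horiz
    then have "r < s" using less_if_next_block by blast
    then show ?thesis using horiz
      unfolding V_def by (intro CollectI exI[of _ "2*r"] exI[of _ "2*s"]) auto
  qed
qed

lemma finite_E: "finite E"
proof (rule finite_subset[OF E_subset])
  have "{{u, v} | u v. u \<in> V \<and> v \<in> V \<and> u \<noteq> v} \<subseteq> (\<lambda>(u, v). {u, v}) ` (V \<times> V)" by auto
  then show "finite {{u, v} | u v. u \<in> V \<and> v \<in> V \<and> u \<noteq> v}"
    by (rule finite_subset) (simp add: V_def)
qed

lemma Deadline_in_rest_iff:
  "Deadline v \<in> set (rest r) \<longleftrightarrow> (\<exists>s. v = 2*s \<and> r \<le> s \<and> s < m*k) \<or> (\<exists>s<m*k. v = 2*s+1)"
  unfolding rest_def by auto

lemma rest_Cons: "r < m*k \<Longrightarrow> rest r = Deadline (2*r) # rest (Suc r)"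
  unfolding rest_def by (simp add: upt_conv_Cons)

lemma odd_in_N_iff: "2*s+1 \<in> N r \<longleftrightarrow> s \<in> NV r"
  unfolding N_def by auto

lemma even_in_N_iff: "2*s \<in> N r \<longleftrightarrow> s \<in> NU r"
  unfolding N_def by auto

lemma remaining_neighbours:
  assumes "r < m*k"
  shows "{v. {2*r, v} \<in> E \<and> Deadline v \<in> set (rest (Suc r))} = N r"
proof (intro set_eqI iffI)
  fix v assume "v \<in> {v. {2*r, v} \<in> E \<and> Deadline v \<in> set (rest (Suc r))}"
  then have e: "{2*r, v} \<in> E" and d: "Deadline v \<in> set (rest (Suc r))" by auto
  from e consider (vert) r' s where "{2*r, v} = {2*r', 2*s+1}" "s < m*k" "r' \<le> s" "s div k = r' div k"
    | (horiz) r' s where "{2*r, v} = {2*r', 2*s}" "s < m*k" "s div k = Suc (r' div k)"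
        "s mod k < H (r' mod k)"
    unfolding E_def by blast
  then show "v \<in> N r"
  proof cases
    case vert
    then have "r = r'" "v = 2*s+1" by (auto simp: doubleton_eq_iff)
    then show ?thesis using vert unfolding N_def NV_def by auto
  next
    case horiz
    then have "r' < s" using less_if_next_block by blast
    moreover have "r = s \<Longrightarrow> v = 2*r' \<Longrightarrow> Suc r \<le> r'" using d by (auto simp: Deadline_in_rest_iff)
    ultimately have "r = r'" "v = 2*s" using horiz(1) by (auto simp: doubleton_eq_iff)
    then show ?thesis using horiz unfolding N_def NU_def by auto
  qed
next
  fix v assume "v \<in> N r"
  then consider (vert) s where "v = 2*s+1" "s \<in> NV r" | (horiz) s where "v = 2*s" "s \<in> NU r"
    unfolding N_def by blast
  then show "v \<in> {v. {2*r, v} \<in> E \<and> Deadline v \<in> set (rest (Suc r))}"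
  proof cases
    case vert
    then show ?thesis unfolding E_def NV_def Deadline_in_rest_iff by auto
  next
    case horiz
    then have "r < s" using less_if_next_block unfolding NU_def by blast
    then show ?thesis using horiz unfolding E_def NU_def Deadline_in_rest_iff by auto
  qed
qed

lemma edges_to_N: "r < m*k \<Longrightarrow> \<forall>v\<in>N r. {2*r, v} \<in> E"
  using remaining_neighbours by blast

lemma finite_N: "finite (N r)"
  unfolding N_def NV_def NU_def by auto

lemma even_notin_N: "2*r \<notin> N r"
  unfolding N_def NU_def by auto

lemma odd_in_N: "r < m*k \<Longrightarrow> 2*r+1 \<in> N r"
  unfolding odd_in_N_iff NV_def by simp

lemma NV_eq:
  assumes "r < m*k"
  shows "NV r = {r..<r div k * k + k}"
proof -
  have "r div k < m" using assms k_pos by (simp add: div_less_iff_less_mult)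
  then have "r div k * k + k \<le> m * k" by (metis mult_le_mono1 mult_Suc Suc_leI add.commute)
  then show ?thesis
    unfolding NV_def div_eq_iff using order_trans[OF div_times_less_eq_dividend[of r k]] by auto
qed

lemma card_NV:
  assumes "r < m*k"
  shows "card (NV r) = k - r mod k"
proof -
  have "r div k * k + r mod k = r" by simp
  then have "r div k * k + k - r = k - r mod k" by linarith
  then show ?thesis unfolding NV_eq[OF assms] by simp
qed

lemma NU_eq:
  assumes "Suc (Suc (r div k)) \<le> m"
  shows "NU r = (\<lambda>j. Suc (r div k) * k + j) ` {..<H (r mod k)}"
proof (intro set_eqI iffI)
  fix s assume "s \<in> NU r"
  then have "s div k = Suc (r div k)" "s mod k < H (r mod k)" unfolding NU_def by auto
  then show "s \<in> (\<lambda>j. Suc (r div k) * k + j) ` {..<H (r mod k)}"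
    by (metis div_mult_mod_eq lessThan_iff rev_image_eqI)
next
  fix s assume "s \<in> (\<lambda>j. Suc (r div k) * k + j) ` {..<H (r mod k)}"
  then obtain j where j: "j < H (r mod k)" "s = Suc (r div k) * k + j" by auto
  have "j < k" using j(1) H_le[of "r mod k"] k_pos by simp
  then have "s < Suc (Suc (r div k)) * k" using j(2) by simp
  also have "\<dots> \<le> m * k" using assms by (rule mult_le_mono1)
  moreover have "s div k = Suc (r div k)" "s mod k = j"
    using block_div_mod[OF \<open>j < k\<close>, of "Suc (r div k)"] j(2) by simp_all
  ultimately show "s \<in> NU r" unfolding NU_def using j(1) by simp
qed

lemma card_N: "card (N r) = card (NV r) + card (NU r)"
proof -
  have "card (N r) = card ((\<lambda>s. 2*s+1) ` NV r) + card ((\<lambda>s. 2*s) ` NU r)"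
    unfolding N_def by (rule card_Un_disjoint) (auto simp: NV_def NU_def)
  then show ?thesis by (simp add: card_image inj_on_def)
qed

lemma rate_bounds: "0 \<le> rate s" "rate s \<le> 1"
  unfolding rate_def using y_nonneg y_le_1 k_pos by auto

lemma rate_dual:
  assumes "r < m*k"
  shows "real (card (N r)) \<le> rate r * card (N r) + (\<Sum>s\<in>NU r. rate s)"
proof (cases "Suc (r div k) = m")
  case True
  then show ?thesis using rate_bounds by (simp add: rate_def sum_nonneg)
next
  case False
  define t where "t = r div k"
  define i where "i = r mod k"
  have "i < k" unfolding i_def using k_pos by simp
  have "t < m" using assms k_pos unfolding t_def by (simp add: div_less_iff_less_mult)
  then have NU: "NU r = (\<lambda>j. Suc t * k + j) ` {..<H i}"
    using NU_eq False unfolding t_def i_def by simp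
  have card: "card (N r) = k - i + H i"
    unfolding card_N card_NV[OF assms] NU i_def by (simp add: card_image inj_on_def)
  have "(\<Sum>j<H i. y j) \<le> (\<Sum>j<H i. rate (Suc t * k + j))"
  proof (rule sum_mono)
    fix j assume "j \<in> {..<H i}"
    then have "j < k" using H_le[OF \<open>i < k\<close>] by simp
    then have "(Suc t * k + j) div k = Suc t" "(Suc t * k + j) mod k = j"
      using block_div_mod by blast+
    then show "y j \<le> rate (Suc t * k + j)" unfolding rate_def using y_le_1 \<open>j < k\<close> by auto
  qed
  also have "\<dots> = (\<Sum>s\<in>NU r. rate s)" unfolding NU by (simp add: sum.reindex)
  finally show ?thesis
    using dual[OF \<open>i < k\<close>] False unfolding card by (simp add: rate_def i_def mult.commute)
qed

definition water :: "(nat set \<Rightarrow> real) \<Rightarrow> real" where "water x = (\<Sum>e\<in>E. x e)"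

definition potential :: "(nat set \<Rightarrow> real) \<Rightarrow> real" where
  "potential x = (\<Sum>s<m*k. rate s * level E x (2*s))"

definition untouched :: "nat \<Rightarrow> (nat set \<Rightarrow> real) \<Rightarrow> bool" where
  "untouched r x \<longleftrightarrow> (\<forall>s. (r div k < s div k \<longrightarrow> level E x (2*s+1) = 0) \<and>
                            (Suc (r div k) < s div k \<longrightarrow> level E x (2*s) = 0))"

text \<open>The remaining neighbours of \<open>u\<^sub>r\<close> (vertex \<open>2 * r\<close>) share a common level, so the step at its
  deadline raises them uniformly: within a block they form a decreasing family of sets, and at the
  start of a block they are all still untouched.  \<open>water \<le> potential\<close> is the charging argument.\<close>

definition invariant :: "nat \<Rightarrow> (nat set \<Rightarrow> real) \<Rightarrow> bool" where
  "invariant r x \<longleftrightarrow> (\<forall>w. level E x w \<le> 1) \<and> (r < m*k \<longrightarrow> (\<exists>\<sigma>. \<forall>w\<in>N r. level E x w = \<sigma>)) \<and>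
     untouched r x \<and> water x \<le> potential x"

lemma invariant_0: "invariant 0 (\<lambda>_. 0)"
proof -
  have "level E (\<lambda>_. 0) w = 0" for w unfolding level_def by simp
  then show ?thesis unfolding invariant_def untouched_def potential_def water_def by simp
qed

lemma level_step:
  fixes d :: real
  assumes "r < m*k"
  shows "level E (add_star (2*r) (N r) d x) w =
         level E x w + (if w = 2*r then card (N r) * d else if w \<in> N r then d else 0)"
  using level_add_star[OF finite_E finite_N even_notin_N edges_to_N[OF assms]] .

lemma untouched_step:
  fixes d :: real
  assumes "r < m*k" "untouched r x"
  shows "untouched (Suc r) (add_star (2*r) (N r) d x)"
  unfolding untouched_def
proof (intro allI conjI impI)
  fix s
  have mono: "r div k \<le> Suc r div k" by (simp add: div_le_mono)
  { assume "Suc r div k < s div k"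
    then have "r div k < s div k" using mono by linarith
    then have "2*s+1 \<notin> N r" unfolding odd_in_N_iff NV_def by auto
    then show "level E (add_star (2*r) (N r) d x) (2*s+1) = 0"
      unfolding level_step[OF assms(1)] using assms(2) \<open>r div k < s div k\<close>
      unfolding untouched_def by auto }
  { assume "Suc (Suc r div k) < s div k"
    then have "Suc (r div k) < s div k" using mono by linarith
    then have "2*s \<notin> N r" "s \<noteq> r" unfolding even_in_N_iff NU_def by auto
    then show "level E (add_star (2*r) (N r) d x) (2*s) = 0"
      unfolding level_step[OF assms(1)] using assms(2) \<open>Suc (r div k) < s div k\<close>
      unfolding untouched_def by auto }
qed

lemma uniform_step:
  fixes d :: real
  assumes "r < m*k" "untouched r x" "\<forall>w\<in>N r. level E x w = \<sigma>"
  shows "\<exists>\<sigma>'. \<forall>w\<in>N (Suc r). level E (add_star (2*r) (N r) d x) w = \<sigma>'"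
proof (cases "Suc r mod k = 0")
  case False
  then have "Suc r div k = r div k" "Suc r mod k = Suc (r mod k)"
    by (metis div_Suc, metis mod_Suc)
  moreover have "Suc (r mod k) < k" using \<open>Suc r mod k = Suc (r mod k)\<close> k_pos
    by (metis mod_less_divisor)
  ultimately have "N (Suc r) \<subseteq> N r"
    using H_antimono[of "r mod k" "Suc (r mod k)"] unfolding N_def NV_def NU_def by auto
  then have "\<forall>w\<in>N (Suc r). level E (add_star (2*r) (N r) d x) w = \<sigma> + d"
    using assms(3) even_notin_N unfolding level_step[OF assms(1)] by auto
  then show ?thesis by blast
next
  case True
  then have blk: "Suc r div k = Suc (r div k)" by (metis div_Suc)
  have "level E (add_star (2*r) (N r) d x) w = 0" if "w \<in> N (Suc r)" for w
  proof -
    from that consider (vert) s where "w = 2*s+1" "s div k = Suc (r div k)"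
      | (horiz) s where "w = 2*s" "s div k = Suc (Suc (r div k))"
      unfolding N_def NV_def NU_def blk by blast
    then have "w \<notin> N r" "w \<noteq> 2*r" "level E x w = 0"
      using assms(2) unfolding N_def NV_def NU_def untouched_def by (cases; force)+
    then show ?thesis unfolding level_step[OF assms(1)] by simp
  qed
  then show ?thesis by blast
qed

lemma potential_step:
  fixes d :: real
  assumes "r < m*k" "0 \<le> d" "water x \<le> potential x"
  shows "water (add_star (2*r) (N r) d x) \<le> potential (add_star (2*r) (N r) d x)"
proof -
  have "r \<notin> NU r" unfolding NU_def by auto
  then have "rate s * level E (add_star (2*r) (N r) d x) (2*s) = rate s * level E x (2*s) +
      ((if s = r then rate s * (card (N r) * d) else 0) + (if s \<in> NU r then rate s * d else 0))" for s
    unfolding level_step[OF assms(1)] even_in_N_iff by (auto simp: algebra_simps)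
  then have "potential (add_star (2*r) (N r) d x) = potential x +
      (\<Sum>s<m*k. (if s = r then rate s * (card (N r) * d) else 0) + (if s \<in> NU r then rate s * d else 0))"
    unfolding potential_def by (simp add: sum.distrib)
  also have "\<dots> = potential x + d * (rate r * card (N r) + (\<Sum>s\<in>NU r. rate s))"
  proof -
    have "NU r \<subseteq> {..<m*k}" unfolding NU_def by auto
    then show ?thesis using assms(1)
      by (simp add: sum.distrib sum.If_cases Int_absorb1 sum_distrib_left algebra_simps)
  qed
  finally have "potential (add_star (2*r) (N r) d x) \<ge> potential x + d * card (N r)"
    using rate_dual[OF assms(1)] assms(2) by (simp add: mult_left_mono)
  moreover have "water (add_star (2*r) (N r) d x) = water x + card (N r) * d"
    unfolding water_def using sum_add_star[OF finite_E edges_to_N[OF assms(1)]] .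
  ultimately show ?thesis using assms(3) by (simp add: mult.commute)
qed

lemma invariant_step:
  assumes "r < m*k" "invariant r x" "wf_step E (N r) (2*r) x x'"
  shows "invariant (Suc r) x'"
proof -
  obtain \<sigma> where \<sigma>: "\<forall>w\<in>N r. level E x w = \<sigma>"
    using assms(1,2) unfolding invariant_def by blast
  have cap: "\<forall>w. level E x w \<le> 1" using assms(2) unfolding invariant_def by blast
  then have "\<sigma> \<le> 1" using \<sigma> odd_in_N[OF assms(1)] by metis
  then obtain d :: real where d: "0 \<le> d" "x' = add_star (2*r) (N r) d x"
    "level E x (2*r) + card (N r) * d \<le> 1" "\<sigma> + d \<le> 1"
    using wf_step_uniform[OF assms(3) \<sigma>] by blast
  have "\<forall>w. level E x' w \<le> 1"
    unfolding d(2) level_step[OF assms(1)] using d(3,4) \<sigma> cap by auto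
  then show ?thesis
    using assms(2) untouched_step[OF assms(1)] uniform_step[OF assms(1) _ \<sigma>]
      potential_step[OF assms(1) d(1)]
    unfolding invariant_def d(2) by blast
qed

lemma no_edge_between_odd: "{2*a+1, 2*b+1} \<notin> E"
  unfolding E_def by (auto simp: doubleton_eq_iff)

lemma wf_run_v_deadlines:
  assumes "\<forall>w. level E x w \<le> 1"
  shows "wf_run E (map (\<lambda>s. Deadline (2*s+1)) ss) x x' \<longleftrightarrow> x' = x"
  using assms
proof (induction ss arbitrary: x)
  case Nil
  then show ?case by (simp add: wf_run_Nil_iff)
next
  case (Cons s ss)
  have no_neighbours:
    "{v. {2*s+1, v} \<in> E \<and> Deadline v \<in> set (map (\<lambda>s. Deadline (2*s+1)) ss)} = {}"
    using no_edge_between_odd by auto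
  show ?case
    unfolding list.map(2) wf_run_Deadline_iff no_neighbours wf_step_empty_iff using Cons by auto
qed

lemma potential_le: "\<forall>w. level E x w \<le> 1 \<Longrightarrow> potential x \<le> (\<Sum>s<m*k. rate s)"
  unfolding potential_def by (intro sum_mono) (simp add: rate_bounds mult_left_le)

lemma wf_run_rest:
  assumes "r \<le> m*k" "invariant r x"
  shows "(\<exists>x'. wf_run E (rest r) x x') \<and>
         (\<forall>x'. wf_run E (rest r) x x' \<longrightarrow> water x' \<le> (\<Sum>s<m*k. rate s))"
  using assms
proof (induction "m*k - r" arbitrary: r x)
  case 0
  then have "rest r = map (\<lambda>s. Deadline (2*s+1)) [0..<m*k]" unfolding rest_def by simp
  moreover have cap: "\<forall>w. level E x w \<le> 1" using 0(3) unfolding invariant_def by blast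
  moreover have "water x \<le> (\<Sum>s<m*k. rate s)"
    using 0(3) potential_le[OF cap] unfolding invariant_def by linarith
  ultimately show ?case using wf_run_v_deadlines[OF cap] by auto
next
  case (Suc n)
  then have r: "r < m*k" by simp
  have IH: "(\<exists>x''. wf_run E (rest (Suc r)) x' x'') \<and>
      (\<forall>x''. wf_run E (rest (Suc r)) x' x'' \<longrightarrow> water x'' \<le> (\<Sum>s<m*k. rate s))"
    if "invariant (Suc r) x'" for x'
    using Suc that by (intro Suc.hyps(1)) auto
  obtain \<sigma> where \<sigma>: "\<forall>w\<in>N r. level E x w = \<sigma>"
    using r Suc.prems(2) unfolding invariant_def by blast
  have cap: "\<forall>w. level E x w \<le> 1" using Suc.prems(2) unfolding invariant_def by blast
  have "\<sigma> \<le> 1" using cap \<sigma> odd_in_N[OF r] by metis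
  then obtain x' where "wf_step E (N r) (2*r) x x'"
    using wf_step_exists_uniform[OF finite_N _ \<sigma>] odd_in_N[OF r] cap by blast
  then show ?case
    unfolding rest_Cons[OF r] wf_run_Deadline_iff remaining_neighbours[OF r]
    using IH invariant_step[OF r Suc.prems(2)] by blast
qed

lemma sum_rate_le: "(\<Sum>s<m*k. rate s) \<le> m * (\<Sum>j<k. y j) + k"
proof -
  have periodic: "(\<Sum>s<n*k. f (s mod k)) = n * (\<Sum>j<k. f j)" for n and f :: "nat \<Rightarrow> real"
  proof (induction n)
    case (Suc n)
    have "(\<Sum>s<Suc n * k. f (s mod k)) = (\<Sum>s<n*k. f (s mod k)) + (\<Sum>s=n*k..<n*k+k. f (s mod k))"
      by (simp add: add.commute sum.atLeastLessThan_concat[symmetric] lessThan_atLeast0)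
    also have "(\<Sum>s=n*k..<n*k+k. f (s mod k)) = (\<Sum>j<k. f j)"
      using sum.shift_bounds_nat_ivl[of "\<lambda>s. f (s mod k)" 0 "n*k" k]
      by (simp add: add.commute lessThan_atLeast0)
    finally show ?case using Suc by (simp add: algebra_simps)
  qed simp
  have "(\<Sum>s<m*k. rate s) \<le> (\<Sum>s<m*k. y (s mod k) + (if (m-1)*k \<le> s then 1 else 0))"
  proof (rule sum_mono)
    fix s assume "s \<in> {..<m*k}"
    show "rate s \<le> y (s mod k) + (if (m-1)*k \<le> s then 1 else 0)"
    proof (cases "Suc (s div k) = m")
      case True
      then have "(m-1) * k \<le> s" by (metis diff_Suc_1 div_times_less_eq_dividend)
      then show ?thesis unfolding rate_def using True y_nonneg k_pos by auto
    qed (use y_nonneg k_pos in \<open>auto simp: rate_def\<close>)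
  qed
  also have "\<dots> = m * (\<Sum>j<k. y j) + real (card {(m-1)*k..<m*k})"
  proof -
    have "{..<m*k} \<inter> {s. (m-1)*k \<le> s} = {(m-1)*k..<m*k}" by auto
    then show ?thesis by (simp add: sum.distrib periodic sum.If_cases)
  qed
  also have "card {(m-1)*k..<m*k} = k" using m_pos by (simp add: diff_mult_distrib)
  finally show ?thesis .
qed

lemma online_instance: "online_instance V E evs"
proof -
  have rest0: "set (rest 0) = Deadline ` V" unfolding rest_def using V_iff by auto
  have "before evs (Arrival u) (Deadline v)" if "u \<in> V" "v \<in> V" for u v
    unfolding evs_def by (rule before_append) (use that rest0 in \<open>auto simp: V_def\<close>)
  moreover have "u \<in> V \<and> v \<in> V" if "{u, v} \<in> E" for u v
    using that E_subset by (auto simp: doubleton_eq_iff)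
  moreover have "distinct (rest 0)" unfolding rest_def by (auto simp: distinct_map inj_on_def)
  ultimately show ?thesis
    unfolding online_instance_def evs_def using E_subset rest0
    by (auto simp: distinct_map inj_on_def V_def atLeast0LessThan)
qed

lemma bipartite: "bipartite E"
  unfolding bipartite_def
proof (intro exI[of _ "{w. even (w + w div 2 div k)}"] ballI)
  fix e assume "e \<in> E"
  then consider (vert) r s where "e = {2*r, 2*s+1}" "s div k = r div k"
    | (horiz) r s where "e = {2*r, 2*s}" "s div k = Suc (r div k)"
    unfolding E_def by blast
  then show "card (e \<inter> {w. even (w + w div 2 div k)}) = 1"
  proof cases
    case vert
    show ?thesis unfolding vert(1) by (rule card_doubleton_Int_eq_1) (use vert(2) in auto)
  next
    case horiz
    have "2*r \<noteq> 2*s" using horiz(2) by auto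
    show ?thesis unfolding horiz(1)
      by (rule card_doubleton_Int_eq_1) (use \<open>2*r \<noteq> 2*s\<close> horiz(2) in auto)
  qed
qed

lemma max_matching_size_ge: "m * k \<le> max_matching_size E"
proof -
  define M where "M = (\<lambda>s. {2*s, 2*s+1}) ` {..<m*k}"
  have "matching E M" unfolding matching_def M_def E_def by auto
  moreover have "card M = m * k"
    unfolding M_def by (subst card_image) (auto simp: inj_on_def doubleton_eq_iff)
  moreover have "finite {M. matching E M}"
    by (rule finite_subset[of _ "Pow E"]) (auto simp: matching_def finite_E)
  ultimately show ?thesis unfolding max_matching_size_def by (metis Max_ge finite_imageI image_eqI mem_Collect_eq)
qed

lemma water_filling_bound:
  "(\<exists>x. wf_run E evs (\<lambda>_. 0) x) \<and>
   (\<forall>x. wf_run E evs (\<lambda>_. 0) x \<longrightarrow> (\<Sum>e\<in>E. x e) \<le> m * (\<Sum>j<k. y j) + k)"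
  using wf_run_rest[OF _ invariant_0] sum_rate_le
  unfolding evs_def wf_run_Arrivals_iff water_def by force

end

lemma (in hard_instance) water_filling_ratio:
  assumes "0 < \<epsilon>" "(\<Sum>j<k. y j) \<le> (2 - sqrt 2 + \<epsilon>/2) * k" "1 \<le> m * (\<epsilon>/2)"
    and "wf_run E evs (\<lambda>_. 0) x"
  shows "(\<Sum>e\<in>E. x e) \<le> (2 - sqrt 2 + \<epsilon>) * max_matching_size E"
proof -
  have "(\<Sum>e\<in>E. x e) \<le> m * (\<Sum>j<k. y j) + k" using water_filling_bound assms(4) by blast
  also have "\<dots> \<le> m * ((2 - sqrt 2 + \<epsilon>/2) * k) + k * (m * (\<epsilon>/2))"
    using assms(2) mult_left_mono[OF assms(3), of "real k"] by (intro add_mono mult_left_mono) auto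
  also have "\<dots> = (2 - sqrt 2 + \<epsilon>) * (m * k)" by (simp add: algebra_simps)
  also have "\<dots> \<le> (2 - sqrt 2 + \<epsilon>) * max_matching_size E"
  proof (rule mult_left_mono)
    have "sqrt 2 < 2" by (rule real_less_lsqrt) (auto simp: power2_eq_square)
    then show "0 \<le> 2 - sqrt 2 + \<epsilon>" using assms(1) by simp
  qed (use max_matching_size_ge in \<open>simp flip: of_nat_mult\<close>)
  finally show ?thesis .
qed

theorem theorem3p5:
  fixes \<epsilon> :: real
  assumes "\<epsilon> > 0"
  shows "\<exists>(V::nat set) E evs.
           online_instance V E evs \<and> bipartite E \<and> max_matching_size E > 0 \<and>
           (\<exists>x. wf_run E evs (\<lambda>_. 0) x) \<and>
           (\<forall>x. wf_run E evs (\<lambda>_. 0) x \<longrightarrow>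
                (\<Sum>e\<in>E. x e) \<le> (2 - sqrt 2 + \<epsilon>) * real (max_matching_size E))"
proof -
  obtain k H y where profile: "dual_profile k H y"
    and sum_y: "(\<Sum>j<k. y j) \<le> (2 - sqrt 2 + \<epsilon>/2) * k"
    using dual_profile_exists[of "\<epsilon>/2"] assms by auto
  define m :: nat where "m = nat \<lceil>2/\<epsilon>\<rceil> + 1"
  have "2/\<epsilon> \<le> m" unfolding m_def by linarith
  then have m_large: "1 \<le> m * (\<epsilon>/2)" using assms by (simp add: field_simps)
  interpret G: hard_instance k H y m
    using profile by (simp add: hard_instance_def hard_instance_axioms_def m_def)
  have "0 < max_matching_size G.E"
    using G.max_matching_size_ge G.k_pos G.m_pos by (metis nat_0_less_mult_iff order.strict_trans2)
  then show ?thesis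
    using G.online_instance G.bipartite G.water_filling_bound
      G.water_filling_ratio[OF assms sum_y m_large] by blast
qed

end
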